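(* Let $\Omega\subset\mathbb{R}^{n+1}$ be a compact convex body with $C^1$ boundary, and let $(\Omega_k)_{k\ge1}$ be a sequence of smooth uniformly convex bodies converging to $\Omega$ in Hausdorff distance. Then for any $\Theta\in(0,1)$ there exists $r(\Theta)>0$ depending only on $\Omega$ and $\Theta$ such that $$\max\big(\omega_\Omega(r(\Theta)),\omega_{\Omega_k}(r(\Theta))\big)<\sqrt{2-2\Theta}\qquad\text{for all }k\in\mathbb{N}.$$
   Context: For a convex body $D$ with $C^1$ boundary and outward unit normal map $\mathcal{N}_D$, $\omega_D(r):=\sup\{|\mathcal{N}_D(X_1)-\mathcal{N}_D(X_2)|:X_1,X_2\in\partial D,\ |X_1-X_2|<r\}$. A convex set $D$ is uniformly convex if there is $R>0$ with $D\subset B^{n+1}_R(X-R\nu)$ for every $X\in\partial D$ and every outward unit normal $\nu$ at $X$. Hausdorff distance: $d_H(A,B)=\max(\sup_{a\in A}\mathrm{dist}(a,B),\sup_{b\in B}\mathrm{dist}(b,A))$. *)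

theory Defs
  imports "HOL-Analysis.Analysis"
begin

definition convex_body :: "'a::euclidean_space set \<Rightarrow> bool" where
  "convex_body D \<longleftrightarrow> compact D \<and> convex D \<and> interior D \<noteq> {}"

fun Ck_on :: "nat \<Rightarrow> 'a::euclidean_space set \<Rightarrow> ('a \<Rightarrow> real) \<Rightarrow> bool" where
  "Ck_on 0 U f \<longleftrightarrow> continuous_on U f"
| "Ck_on (Suc k) U f \<longleftrightarrow> f differentiable_on U \<and>
      (\<forall>v. Ck_on k U (\<lambda>x. frechet_derivative f (at x) v))"

definition Cinf_on :: "'a::euclidean_space set \<Rightarrow> ('a \<Rightarrow> real) \<Rightarrow> bool" where
  "Cinf_on U f \<longleftrightarrow> (\<forall>k. Ck_on k U f)"

definition boundary_defining :: "('a::euclidean_space set \<Rightarrow> ('a \<Rightarrow> real) \<Rightarrow> bool)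
     \<Rightarrow> 'a set \<Rightarrow> bool" where
  "boundary_defining Reg D \<longleftrightarrow> (\<exists>U f. open U \<and> frontier D \<subseteq> U \<and> Reg U f \<and>
      (\<forall>x\<in>U. x \<in> D \<longleftrightarrow> f x \<le> 0) \<and>
      (\<forall>x\<in>frontier D. frechet_derivative f (at x) \<noteq> (\<lambda>v. 0)))"

definition C1_boundary :: "'a::euclidean_space set \<Rightarrow> bool" where
  "C1_boundary D \<longleftrightarrow> boundary_defining (Ck_on 1) D"

definition smooth_boundary :: "'a::euclidean_space set \<Rightarrow> bool" where
  "smooth_boundary D \<longleftrightarrow> boundary_defining Cinf_on D"

definition outward_unit_normal :: "'a::euclidean_space set \<Rightarrow> 'a \<Rightarrow> 'a \<Rightarrow> bool" where
  "outward_unit_normal D X \<nu> \<longleftrightarrow> X \<in> frontier D \<and> norm \<nu> = 1 \<and>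
      (\<forall>Y\<in>D. \<nu> \<bullet> (Y - X) \<le> 0)"

text \<open>Outward unit normal map (well defined when the boundary is C^1).\<close>
definition normal_map :: "'a::euclidean_space set \<Rightarrow> 'a \<Rightarrow> 'a" where
  "normal_map D X = (THE \<nu>. outward_unit_normal D X \<nu>)"

definition omega :: "'a::euclidean_space set \<Rightarrow> real \<Rightarrow> real" where
  "omega D r = Sup {norm (normal_map D X1 - normal_map D X2) | X1 X2.
      X1 \<in> frontier D \<and> X2 \<in> frontier D \<and> norm (X1 - X2) < r}"

definition uniformly_convex :: "'a::euclidean_space set \<Rightarrow> bool" where
  "uniformly_convex D \<longleftrightarrow> convex D \<and> (\<exists>R>0. \<forall>X \<nu>. outward_unit_normal D X \<nu> \<longrightarrow>
      D \<subseteq> cball (X - R *\<^sub>R \<nu>) R)"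

definition hausdorff_dist :: "'a::metric_space set \<Rightarrow> 'a set \<Rightarrow> real" where
  "hausdorff_dist A B = max (SUP a\<in>A. infdist a B) (SUP b\<in>B. infdist b A)"

end

theory Submission
  imports Defs
begin

(* A defining function f of class C^1 gives a convex body a unique outward unit normal at every
   boundary point, namely the normalised gradient of f. Outward normals pass to limits, also
   along sets converging in Hausdorff distance. Hence if the normals of the tail of the sequence
   were not uniformly equicontinuous, pairs of ever closer boundary points with normals at
   distance at least eps would, along a subsequence, converge to one boundary point of Omega
   carrying two different normals. Applied to constant sequences, the same argument covers Omega
   and the finitely many remaining bodies; a common radius with oscillation below
   eps = sqrt (2 - 2 Theta) / 2 then exists. *)

definition unique_normals :: "'a::euclidean_space set \<Rightarrow> bool" where
  "unique_normals D \<longleftrightarrow> (\<forall>X\<in>frontier D. \<exists>!\<nu>. outward_unit_normal D X \<nu>)"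

lemma has_derivative_along_line:
  fixes f :: "'a::real_normed_vector \<Rightarrow> real"
  assumes "(f has_derivative f') (at X)"
  shows "((\<lambda>t. f (X + t *\<^sub>R v)) has_real_derivative f' v) (at 0)"
proof -
  have line: "((\<lambda>t. X + t *\<^sub>R v) has_derivative (\<lambda>t. t *\<^sub>R v)) (at 0)"
    by (auto intro!: derivative_eq_intros)
  have "((\<lambda>t. f (X + t *\<^sub>R v)) has_derivative (\<lambda>t. f' (t *\<^sub>R v))) (at 0)"
    using has_derivative_compose[OF line, of f f'] assms by simp
  moreover have "f' (t *\<^sub>R v) = f' v * t" for t
    using linear_scale[OF has_derivative_linear[OF assms]] by simp
  ultimately show ?thesis by (simp add: has_field_derivative_def)
qed

lemma has_derivative_eventually_increasing:
  fixes f :: "'a::real_normed_vector \<Rightarrow> real"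
  assumes "(f has_derivative f') (at X)" and "f' v > 0"
  shows "\<forall>\<^sub>F t in at_right 0. f X < f (X + t *\<^sub>R v)"
  using DERIV_pos_inc_right[OF has_derivative_along_line[OF assms(1)] assms(2)]
  by (auto simp: eventually_at_right_field)

lemma has_derivative_eventually_decreasing:
  fixes f :: "'a::real_normed_vector \<Rightarrow> real"
  assumes "(f has_derivative f') (at X)" and "f' v < 0"
  shows "\<forall>\<^sub>F t in at_right 0. f (X + t *\<^sub>R v) < f X"
  using has_derivative_eventually_increasing[OF has_derivative_minus[OF assms(1)]] assms(2)
  by simp

lemma unit_vector_eq_if_halfspace_subset:
  fixes g \<nu> :: "'a::euclidean_space"
  assumes "norm \<nu> = 1" and "g \<noteq> 0" and "\<And>v. g \<bullet> v < 0 \<Longrightarrow> \<nu> \<bullet> v \<le> 0"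
  shows "\<nu> = g /\<^sub>R norm g"
proof -
  have "closure {v. g \<bullet> v < 0} \<subseteq> {v. \<nu> \<bullet> v \<le> 0}"
    using assms(3) by (intro closure_minimal) (auto simp: closed_halfspace_le)
  then have le: "\<nu> \<bullet> v \<le> 0" if "g \<bullet> v \<le> 0" for v
    using assms(2) that by auto
  have "0 \<le> \<nu> \<bullet> g"
    using le[of "- g"] by simp
  \<comment> \<open>test against a multiple of the component of \<open>\<nu>\<close> orthogonal to \<open>g\<close>\<close>
  moreover have "(norm g)\<^sup>2 \<le> (\<nu> \<bullet> g)\<^sup>2"
    using le[of "(g \<bullet> g) *\<^sub>R \<nu> - (g \<bullet> \<nu>) *\<^sub>R g"] assms(1)
    by (simp add: inner_diff_right inner_commute power2_eq_square power2_norm_eq_inner[symmetric])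
  ultimately have "norm \<nu> * norm g \<le> \<nu> \<bullet> g"
    using assms(1) power2_le_imp_le by simp
  then have "\<nu> \<bullet> g = norm \<nu> * norm g"
    using norm_cauchy_schwarz[of \<nu> g] by linarith
  then have "g = norm g *\<^sub>R \<nu>"
    using norm_cauchy_schwarz_eq[of \<nu> g] assms(1) by simp
  then show ?thesis
    using assms(2) by (metis norm_eq_zero divideR_right)
qed

lemma defining_function_zero_on_frontier:
  fixes f :: "'a::topological_space \<Rightarrow> real"
  assumes "closed D" and "open U" and "continuous_on U f" and "X \<in> frontier D" and "X \<in> U"
    and sublevel: "\<forall>x\<in>U. x \<in> D \<longleftrightarrow> f x \<le> 0"
  shows "f X = 0"
proof (rule ccontr)
  assume "f X \<noteq> 0"
  moreover have "f X \<le> 0"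
    using sublevel frontier_subset_closed[OF assms(1)] assms(4,5) by blast
  ultimately have "X \<in> U \<inter> f -` {..<0}"
    using assms(5) by simp
  moreover have "open (U \<inter> f -` {..<0})"
    by (rule continuous_open_preimage[OF assms(3,2) open_lessThan])
  moreover have "U \<inter> f -` {..<0} \<subseteq> D"
    using sublevel by fastforce
  ultimately have "X \<in> interior D"
    by (blast intro: interiorI)
  then show False
    using assms(4) by (simp add: frontier_def)
qed

lemma eventually_ray_in_open:
  fixes X v :: "'a::real_normed_vector"
  assumes "open U" and "X \<in> U"
  shows "\<forall>\<^sub>F t in at_right 0. X + t *\<^sub>R v \<in> U"
  by (rule topological_tendstoD[OF _ assms]) (auto intro!: tendsto_eq_intros)

lemma eventually_ray_in_sublevel_set:
  fixes f :: "'a::real_normed_vector \<Rightarrow> real"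
  assumes "open U" and "X \<in> U" and "\<forall>x\<in>U. x \<in> D \<longleftrightarrow> f x \<le> 0" and "f X = 0"
    and "(f has_derivative f') (at X)" and "f' v < 0"
  shows "\<forall>\<^sub>F t in at_right 0. X + t *\<^sub>R v \<in> D"
  using has_derivative_eventually_decreasing[OF assms(5,6)] eventually_ray_in_open[OF assms(1,2), of v]
  by eventually_elim (use assms(3,4) in auto)

lemma eventually_ray_not_in_sublevel_set:
  fixes f :: "'a::real_normed_vector \<Rightarrow> real"
  assumes "open U" and "X \<in> U" and "\<forall>x\<in>U. x \<in> D \<longleftrightarrow> f x \<le> 0" and "f X = 0"
    and "(f has_derivative f') (at X)" and "f' v > 0"
  shows "\<forall>\<^sub>F t in at_right 0. X + t *\<^sub>R v \<notin> D"
  using has_derivative_eventually_increasing[OF assms(5,6)] eventually_ray_in_open[OF assms(1,2), of v]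
  by eventually_elim (use assms(3,4) in auto)

lemma outward_unit_normal_if_rays_leave:
  fixes D :: "'a::euclidean_space set"
  assumes "convex D" and "X \<in> D" and "X \<in> frontier D" and "norm u = 1"
    and leave: "\<And>v. u \<bullet> v > 0 \<Longrightarrow> \<forall>\<^sub>F t in at_right 0. X + t *\<^sub>R v \<notin> D"
  shows "outward_unit_normal D X u"
  unfolding outward_unit_normal_def
proof (intro conjI ballI)
  fix Y assume "Y \<in> D"
  show "u \<bullet> (Y - X) \<le> 0"
  proof (rule ccontr)
    assume "\<not> ?thesis"
    then have "u \<bullet> (Y - X) > 0"
      by simp
    have "\<forall>\<^sub>F t in at_right 0. 0 < t \<and> t < (1::real)"
      unfolding eventually_at_right_field by (auto intro!: exI[of _ 1])
    then have "\<forall>\<^sub>F t in at_right 0. X + t *\<^sub>R (Y - X) \<in> D"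
    proof eventually_elim
      case (elim t)
      then have "(1 - t) *\<^sub>R X + t *\<^sub>R Y \<in> D"
        using convexD[OF assms(1,2) \<open>Y \<in> D\<close>, of "1 - t" t] by simp
      then show ?case
        by (simp add: algebra_simps)
    qed
    then show False
      using leave[OF \<open>u \<bullet> (Y - X) > 0\<close>] eventually_happens'[OF trivial_limit_at_right_real]
      by (metis (mono_tags, lifting) eventually_conj)
  qed
qed (use assms(3,4) in auto)

lemma outward_unit_normal_eq_if_rays_enter:
  fixes g :: "'a::euclidean_space"
  assumes normal: "outward_unit_normal D X \<nu>" and "g \<noteq> 0"
    and enter: "\<And>v. g \<bullet> v < 0 \<Longrightarrow> \<forall>\<^sub>F t in at_right 0. X + t *\<^sub>R v \<in> D"
  shows "\<nu> = g /\<^sub>R norm g"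
proof (rule unit_vector_eq_if_halfspace_subset[OF _ \<open>g \<noteq> 0\<close>])
  show "norm \<nu> = 1"
    using normal by (simp add: outward_unit_normal_def)
  fix v assume "g \<bullet> v < 0"
  have "\<forall>\<^sub>F t in at_right 0. X + t *\<^sub>R v \<in> D \<and> 0 < t"
    using enter[OF \<open>g \<bullet> v < 0\<close>] eventually_at_right_less by eventually_elim auto
  then obtain t where "X + t *\<^sub>R v \<in> D" and "0 < t"
    using eventually_happens'[OF trivial_limit_at_right_real] by blast
  then have "t * (\<nu> \<bullet> v) \<le> 0"
    using normal unfolding outward_unit_normal_def by force
  then show "\<nu> \<bullet> v \<le> 0"
    using \<open>0 < t\<close> by (simp add: mult_le_0_iff)
qed

lemma unique_normal_at_regular_point:
  fixes D :: "'a::euclidean_space set" and f :: "'a \<Rightarrow> real"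
  assumes "convex D" and "closed D" and "open U" and "X \<in> frontier D" and "X \<in> U"
    and "continuous_on U f" and "f differentiable (at X)"
    and sublevel: "\<forall>x\<in>U. x \<in> D \<longleftrightarrow> f x \<le> 0"
    and "frechet_derivative f (at X) \<noteq> (\<lambda>v. 0)"
  shows "\<exists>!\<nu>. outward_unit_normal D X \<nu>"
proof -
  define f' where "f' = frechet_derivative f (at X)"
  have f': "(f has_derivative f') (at X)"
    using assms(7) frechet_derivative_works f'_def by blast
  \<comment> \<open>the gradient of \<open>f\<close> at \<open>X\<close>\<close>
  define g where "g = adjoint f' 1"
  have f'_eq: "f' v = g \<bullet> v" for v
    using adjoint_works[OF has_derivative_linear[OF f'], of v 1] by (simp add: g_def inner_commute)
  have "g \<noteq> 0"
    using assms(9) f'_eq by (auto simp: f'_def[symmetric])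
  have "f X = 0"
    using defining_function_zero_on_frontier[OF assms(2,3,6,4,5) sublevel] .
  note rays = eventually_ray_in_sublevel_set[OF assms(3,5) sublevel \<open>f X = 0\<close> f']
    eventually_ray_not_in_sublevel_set[OF assms(3,5) sublevel \<open>f X = 0\<close> f']
  have "outward_unit_normal D X (g /\<^sub>R norm g)"
  proof (rule outward_unit_normal_if_rays_leave[OF assms(1) _ assms(4)])
    show "X \<in> D"
      using assms(2,4) frontier_subset_closed by blast
    show "norm (g /\<^sub>R norm g) = 1"
      using \<open>g \<noteq> 0\<close> by simp
    show "\<forall>\<^sub>F t in at_right 0. X + t *\<^sub>R v \<notin> D" if "(g /\<^sub>R norm g) \<bullet> v > 0" for v
      using rays(2)[of v] that \<open>g \<noteq> 0\<close> by (simp add: f'_eq zero_less_mult_iff)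
  qed
  moreover have "\<nu> = g /\<^sub>R norm g" if "outward_unit_normal D X \<nu>" for \<nu>
    using outward_unit_normal_eq_if_rays_enter[OF that \<open>g \<noteq> 0\<close>] rays(1) f'_eq by simp
  ultimately show ?thesis
    by blast
qed

lemma C1_boundary_unique_normals:
  fixes D :: "'a::euclidean_space set"
  assumes "convex D" and "closed D" and "C1_boundary D"
  shows "unique_normals D"
proof -
  obtain U f where U: "open U" "frontier D \<subseteq> U" and "Ck_on 1 U f"
    and sublevel: "\<forall>x\<in>U. x \<in> D \<longleftrightarrow> f x \<le> 0"
    and regular: "\<forall>x\<in>frontier D. frechet_derivative f (at x) \<noteq> (\<lambda>v. 0)"
    using assms(3) unfolding C1_boundary_def boundary_defining_def by blast
  then have "f differentiable_on U"
    by simp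
  then show ?thesis
    unfolding unique_normals_def
    using unique_normal_at_regular_point[OF assms(1,2) U(1) _ _ _ _ sublevel] U regular
    by (metis differentiable_imp_continuous_on differentiable_on_eq_differentiable_at subsetD)
qed

lemma smooth_boundary_imp_C1_boundary: "smooth_boundary D \<Longrightarrow> C1_boundary D"
  unfolding smooth_boundary_def C1_boundary_def boundary_defining_def Cinf_on_def by blast

lemma outward_unit_normal_normal_map:
  "unique_normals D \<Longrightarrow> X \<in> frontier D \<Longrightarrow> outward_unit_normal D X (normal_map D X)"
  unfolding unique_normals_def normal_map_def by (blast intro: theI')

lemma frontier_if_supporting_unit_vector:
  fixes D :: "'a::real_inner set"
  assumes "X \<in> D" and "norm V = 1" and "\<forall>Y\<in>D. V \<bullet> (Y - X) \<le> 0"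
  shows "X \<in> frontier D"
proof -
  have "X \<notin> interior D"
  proof
    assume "X \<in> interior D"
    then obtain e where "e > 0" "ball X e \<subseteq> D"
      using mem_interior by blast
    moreover have "X + (e/2) *\<^sub>R V \<in> ball X e"
      using \<open>e > 0\<close> assms(2) by (simp add: dist_norm)
    ultimately have "V \<bullet> ((e/2) *\<^sub>R V) \<le> 0"
      using assms(3) by fastforce
    then show False
      using \<open>e > 0\<close> assms(2) by (simp add: norm_eq_1)
  qed
  then show ?thesis
    using assms(1) closure_subset by (auto simp: frontier_def)
qed

lemma infdist_le_hausdorff_dist_left:
  fixes A B :: "'a::metric_space set"
  assumes "compact A" and "a \<in> A"
  shows "infdist a B \<le> hausdorff_dist A B"
proof -
  have "bdd_above ((\<lambda>a. infdist a B) ` A)"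
    by (intro bounded_imp_bdd_above compact_imp_bounded compact_continuous_image
        continuous_intros assms(1))
  then have "infdist a B \<le> (SUP a\<in>A. infdist a B)"
    using assms(2) by (rule cSUP_upper[rotated])
  then show ?thesis
    unfolding hausdorff_dist_def by linarith
qed

lemma infdist_le_hausdorff_dist_right:
  fixes A B :: "'a::metric_space set"
  assumes "compact B" and "b \<in> B"
  shows "infdist b A \<le> hausdorff_dist A B"
  using infdist_le_hausdorff_dist_left[OF assms, of A] by (simp add: hausdorff_dist_def max.commute)

lemma hausdorff_dist_self: "A \<noteq> {} \<Longrightarrow> hausdorff_dist A A = 0"
  by (simp add: hausdorff_dist_def cong: SUP_cong)

lemma hausdorff_limit_mem:
  fixes S :: "nat \<Rightarrow> 'a::metric_space set"
  assumes "closed D" and "D \<noteq> {}" and "\<And>m. compact (S m)"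
    and "(\<lambda>m. hausdorff_dist (S m) D) \<longlonglongrightarrow> 0"
    and "\<And>m. x m \<in> S m" and "x \<longlonglongrightarrow> X"
  shows "X \<in> D"
proof -
  have "(\<lambda>m. infdist (x m) D) \<longlonglongrightarrow> infdist X D"
    using assms(6) by (rule tendsto_infdist)
  moreover have "infdist (x m) D \<le> hausdorff_dist (S m) D" for m
    using infdist_le_hausdorff_dist_left[OF assms(3,5)] .
  ultimately have "infdist X D \<le> 0"
    using assms(4) by (intro LIMSEQ_le) auto
  then have "infdist X D = 0"
    using infdist_nonneg[of X D] by linarith
  then show ?thesis
    using in_closed_iff_infdist_zero[OF assms(1,2)] by blast
qed

lemma hausdorff_approximating_sequence:
  fixes S :: "nat \<Rightarrow> 'a::heine_borel set"
  assumes "compact D" and "\<And>m. compact (S m)" and "\<And>m. S m \<noteq> {}"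
    and "(\<lambda>m. hausdorff_dist (S m) D) \<longlonglongrightarrow> 0" and "Y \<in> D"
  obtains y where "y \<longlonglongrightarrow> Y" and "\<And>m. y m \<in> S m"
proof -
  have "\<exists>z. z \<in> S m \<and> infdist Y (S m) = dist Y z" for m
    using infdist_attains_inf[OF compact_imp_closed[OF assms(2)] assms(3)] by metis
  then obtain y where y: "\<And>m. y m \<in> S m" and dist_y: "\<And>m. infdist Y (S m) = dist Y (y m)"
    by metis
  have "norm (dist (y m) Y) \<le> hausdorff_dist (S m) D" for m
    using infdist_le_hausdorff_dist_right[OF assms(1,5), of "S m"] dist_y[of m]
    by (simp add: dist_commute)
  then have "(\<lambda>m. dist (y m) Y) \<longlonglongrightarrow> 0"
    by (rule Lim_null_comparison[OF always_eventually[OF allI] assms(4)])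
  then show ?thesis
    using that y tendsto_dist_iff by blast
qed

lemma hausdorff_bounded_sequence:
  fixes S :: "nat \<Rightarrow> 'a::{real_normed_vector, heine_borel} set"
  assumes "compact D" and "D \<noteq> {}" and "\<And>m. compact (S m)"
    and "(\<lambda>m. hausdorff_dist (S m) D) \<longlonglongrightarrow> 0" and "\<And>m. x m \<in> S m"
  shows "bounded (range x)"
proof -
  obtain K where K: "\<And>m. norm (hausdorff_dist (S m) D) \<le> K"
    using BseqE[OF convergent_imp_Bseq[OF convergentI[OF assms(4)]]] by metis
  obtain R where R: "\<And>y. y \<in> D \<Longrightarrow> norm y \<le> R"
    using compact_imp_bounded[OF assms(1)] bounded_iff by metis
  have "norm (x m) \<le> R + K" for m
  proof -
    obtain y where "y \<in> D" and y: "infdist (x m) D = dist (x m) y"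
      using infdist_attains_inf[OF compact_imp_closed[OF assms(1)] assms(2)] by metis
    have "dist (x m) y \<le> K"
      using infdist_le_hausdorff_dist_left[OF assms(3,5), where B = D] K[of m] y
      by (metis abs_le_D1 order_trans real_norm_def)
    moreover have "norm (x m) \<le> norm y + dist (x m) y"
      by (metis dist_norm norm_triangle_sub)
    ultimately show ?thesis
      using R[OF \<open>y \<in> D\<close>] by linarith
  qed
  then show ?thesis
    unfolding bounded_iff by blast
qed

lemma outward_unit_normal_hausdorff_limit:
  fixes S :: "nat \<Rightarrow> 'a::euclidean_space set"
  assumes "compact D" and "D \<noteq> {}" and "\<And>m. compact (S m)"
    and "(\<lambda>m. hausdorff_dist (S m) D) \<longlonglongrightarrow> 0"
    and normal: "\<And>m. outward_unit_normal (S m) (x m) (v m)"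
    and "x \<longlonglongrightarrow> X" and "v \<longlonglongrightarrow> V"
  shows "outward_unit_normal D X V"
proof -
  have x_mem: "x m \<in> S m" for m
    using normal[of m] frontier_subset_closed[OF compact_imp_closed[OF assms(3)]]
    unfolding outward_unit_normal_def by blast
  then have "S m \<noteq> {}" for m
    by blast
  have "X \<in> D"
    using hausdorff_limit_mem[OF compact_imp_closed[OF assms(1)] assms(2,3,4) x_mem assms(6)] .
  have "(\<lambda>m. norm (v m)) \<longlonglongrightarrow> norm V"
    using assms(7) by (rule tendsto_norm)
  moreover have "norm (v m) = 1" for m
    using normal[of m] unfolding outward_unit_normal_def by blast
  ultimately have "(\<lambda>m. 1) \<longlonglongrightarrow> norm V"
    by simp
  then have "norm V = 1"
    using LIMSEQ_unique[OF tendsto_const] by metis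
  have "V \<bullet> (Y - X) \<le> 0" if "Y \<in> D" for Y
  proof -
    obtain y where "y \<longlonglongrightarrow> Y" and y_mem: "\<And>m. y m \<in> S m"
      using hausdorff_approximating_sequence[OF assms(1,3) \<open>\<And>m. S m \<noteq> {}\<close> assms(4) \<open>Y \<in> D\<close>]
      by blast
    have "(\<lambda>m. v m \<bullet> (y m - x m)) \<longlonglongrightarrow> V \<bullet> (Y - X)"
      by (intro tendsto_intros \<open>y \<longlonglongrightarrow> Y\<close> assms(6,7))
    moreover have "\<forall>m. v m \<bullet> (y m - x m) \<le> 0"
      using normal y_mem unfolding outward_unit_normal_def by blast
    ultimately show ?thesis
      using LIMSEQ_le_const2 by blast
  qed
  then show ?thesis
    unfolding outward_unit_normal_def
    using frontier_if_supporting_unit_vector \<open>X \<in> D\<close> \<open>norm V = 1\<close> by blast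
qed

lemma normal_map_differences_subseq_tendsto_zero:
  fixes S :: "nat \<Rightarrow> 'a::euclidean_space set"
  assumes "compact D" and "D \<noteq> {}" and "unique_normals D"
    and "\<And>m. compact (S m)" and "\<And>m. unique_normals (S m)"
    and "(\<lambda>m. hausdorff_dist (S m) D) \<longlonglongrightarrow> 0"
    and "\<And>m. x m \<in> frontier (S m)" and "\<And>m. y m \<in> frontier (S m)"
    and "(\<lambda>m. x m - y m) \<longlonglongrightarrow> 0"
  obtains \<phi> where "strict_mono \<phi>"
    and "(\<lambda>m. normal_map (S (\<phi> m)) (x (\<phi> m)) - normal_map (S (\<phi> m)) (y (\<phi> m))) \<longlonglongrightarrow> 0"
proof -
  define u where "u m = normal_map (S m) (x m)" for m
  define w where "w m = normal_map (S m) (y m)" for m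
  have u: "outward_unit_normal (S m) (x m) (u m)"
    and w: "outward_unit_normal (S m) (y m) (w m)" for m
    unfolding u_def w_def by (simp_all add: outward_unit_normal_normal_map assms(5,7,8))
  have "bounded (range x)"
    using hausdorff_bounded_sequence[OF assms(1,2,4,6)] assms(7)
      frontier_subset_closed[OF compact_imp_closed[OF assms(4)]] by blast
  moreover have "range (\<lambda>m. (x m, u m, w m)) \<subseteq> range x \<times> cball 0 1 \<times> cball 0 1"
    using u w by (auto simp: outward_unit_normal_def)
  ultimately have "bounded (range (\<lambda>m. (x m, u m, w m)))"
    by (rule bounded_subset[OF bounded_Times[OF _ bounded_Times[OF bounded_cball bounded_cball]]])
  then obtain \<phi> l where "strict_mono \<phi>" and "((\<lambda>m. (x m, u m, w m)) \<circ> \<phi>) \<longlonglongrightarrow> l"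
    using bounded_imp_convergent_subsequence by blast
  moreover obtain X U W where "l = (X, U, W)"
    by (cases l) auto
  ultimately have lim: "((\<lambda>m. (x m, u m, w m)) \<circ> \<phi>) \<longlonglongrightarrow> (X, U, W)"
    by simp
  have x_lim: "(\<lambda>m. x (\<phi> m)) \<longlonglongrightarrow> X" and u_lim: "(\<lambda>m. u (\<phi> m)) \<longlonglongrightarrow> U"
    and w_lim: "(\<lambda>m. w (\<phi> m)) \<longlonglongrightarrow> W"
    using tendsto_fst[OF lim] tendsto_fst[OF tendsto_snd[OF lim]] tendsto_snd[OF tendsto_snd[OF lim]]
    by (simp_all add: o_def)
  have "(\<lambda>m. x (\<phi> m) - (x (\<phi> m) - y (\<phi> m))) \<longlonglongrightarrow> X - 0"
    using x_lim LIMSEQ_subseq_LIMSEQ[OF assms(9) \<open>strict_mono \<phi>\<close>]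
    by (intro tendsto_diff) (simp_all add: o_def)
  then have y_lim: "(\<lambda>m. y (\<phi> m)) \<longlonglongrightarrow> X"
    by simp
  have hausdorff_lim: "(\<lambda>m. hausdorff_dist (S (\<phi> m)) D) \<longlonglongrightarrow> 0"
    using LIMSEQ_subseq_LIMSEQ[OF assms(6) \<open>strict_mono \<phi>\<close>] by (simp add: o_def)
  have "outward_unit_normal D X U" and "outward_unit_normal D X W"
    using outward_unit_normal_hausdorff_limit[OF assms(1,2,4) hausdorff_lim u x_lim u_lim]
      outward_unit_normal_hausdorff_limit[OF assms(1,2,4) hausdorff_lim w y_lim w_lim] .
  then have "U = W"
    using assms(3) unfolding unique_normals_def outward_unit_normal_def by blast
  then show ?thesis
    using that[OF \<open>strict_mono \<phi>\<close>] tendsto_diff[OF u_lim w_lim] by (simp add: u_def w_def)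
qed

definition normals_close :: "'a::euclidean_space set \<Rightarrow> real \<Rightarrow> real \<Rightarrow> bool" where
  "normals_close D r \<epsilon> \<longleftrightarrow> (\<forall>X1\<in>frontier D. \<forall>X2\<in>frontier D.
     norm (X1 - X2) < r \<longrightarrow> norm (normal_map D X1 - normal_map D X2) < \<epsilon>)"

lemma normals_close_antimono: "normals_close D r \<epsilon> \<Longrightarrow> s \<le> r \<Longrightarrow> normals_close D s \<epsilon>"
  unfolding normals_close_def by force

lemma eventually_normals_close:
  fixes S :: "nat \<Rightarrow> 'a::euclidean_space set"
  assumes "compact D" and "D \<noteq> {}" and "unique_normals D"
    and "\<And>k. compact (S k)" and "\<And>k. unique_normals (S k)"
    and "(\<lambda>k. hausdorff_dist (S k) D) \<longlonglongrightarrow> 0" and "\<epsilon> > 0"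
  shows "\<exists>N. \<exists>r>0. \<forall>k\<ge>N. normals_close (S k) r \<epsilon>"
proof (rule ccontr)
  assume "\<not> ?thesis"
  then have "\<exists>k\<ge>m. \<not> normals_close (S k) (inverse (real (Suc m))) \<epsilon>" for m
    by (metis inverse_positive_iff_positive of_nat_0_less_iff zero_less_Suc)
  then have "\<exists>k x y. m \<le> k \<and> x \<in> frontier (S k) \<and> y \<in> frontier (S k) \<and>
      norm (x - y) < inverse (real (Suc m)) \<and>
      \<epsilon> \<le> norm (normal_map (S k) x - normal_map (S k) y)" for m
    unfolding normals_close_def by (meson not_le)
  then obtain \<kappa> x y where "\<And>m. m \<le> \<kappa> m"
    and mem: "\<And>m. x m \<in> frontier (S (\<kappa> m))" "\<And>m. y m \<in> frontier (S (\<kappa> m))"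
    and close: "\<And>m. norm (x m - y m) < inverse (real (Suc m))"
    and far: "\<And>m. \<epsilon> \<le> norm (normal_map (S (\<kappa> m)) (x m) - normal_map (S (\<kappa> m)) (y m))"
    by metis
  have "filterlim \<kappa> at_top sequentially"
    by (rule filterlim_at_top_mono[OF filterlim_ident always_eventually])
      (use \<open>\<And>m. m \<le> \<kappa> m\<close> in blast)
  then have hausdorff_lim: "(\<lambda>m. hausdorff_dist (S (\<kappa> m)) D) \<longlonglongrightarrow> 0"
    using filterlim_compose[OF assms(6)] by blast
  have "(\<lambda>m. x m - y m) \<longlonglongrightarrow> 0"
    using close
    by (intro Lim_null_comparison[OF always_eventually[OF allI] LIMSEQ_inverse_real_of_nat])
      (rule less_imp_le)
  then obtain \<phi> where
    "(\<lambda>m. normal_map (S (\<kappa> (\<phi> m))) (x (\<phi> m)) - normal_map (S (\<kappa> (\<phi> m))) (y (\<phi> m))) \<longlonglongrightarrow> 0"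
    using normal_map_differences_subseq_tendsto_zero[of D "\<lambda>m. S (\<kappa> m)" x y,
        OF assms(1-3) assms(4) assms(5) hausdorff_lim mem] by blast
  then have "\<forall>\<^sub>F m in sequentially.
      norm (normal_map (S (\<kappa> (\<phi> m))) (x (\<phi> m)) - normal_map (S (\<kappa> (\<phi> m))) (y (\<phi> m))) < \<epsilon>"
    using assms(7) by (simp add: tendsto_iff)
  then obtain m where
    "norm (normal_map (S (\<kappa> (\<phi> m))) (x (\<phi> m)) - normal_map (S (\<kappa> (\<phi> m))) (y (\<phi> m))) < \<epsilon>"
    using eventually_happens'[OF sequentially_bot] by blast
  with far[of "\<phi> m"] show False
    by linarith
qed

lemma normals_uniformly_close:
  fixes D :: "'a::euclidean_space set"
  assumes "compact D" and "D \<noteq> {}" and "unique_normals D" and "\<epsilon> > 0"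
  shows "\<exists>r>0. normals_close D r \<epsilon>"
  using eventually_normals_close[of D "\<lambda>_. D", OF assms(1-3) assms(1,3) _ assms(4)]
  by (auto simp: hausdorff_dist_self[OF assms(2)])

lemma omega_le_if_normals_close:
  fixes D :: "'a::euclidean_space set"
  assumes "frontier D \<noteq> {}" and "r > 0" and "normals_close D r \<epsilon>"
  shows "omega D r \<le> \<epsilon>"
  unfolding omega_def
proof (rule cSup_least)
  show "{norm (normal_map D X1 - normal_map D X2) |X1 X2.
      X1 \<in> frontier D \<and> X2 \<in> frontier D \<and> norm (X1 - X2) < r} \<noteq> {}"
    using assms(1,2) by force
qed (use assms(3) in \<open>fastforce simp: normals_close_def intro: less_imp_le\<close>)

lemma uniform_radius_if_eventually_uniform:
  fixes P :: "nat \<Rightarrow> real \<Rightarrow> bool"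
  assumes antimono: "\<And>k r s. P k r \<Longrightarrow> s \<le> r \<Longrightarrow> P k s"
    and each: "\<And>k. \<exists>r>0. P k r" and tail: "\<exists>N. \<exists>r>0. \<forall>k\<ge>N. P k r"
  shows "\<exists>r>0. \<forall>k. P k r"
proof -
  obtain N r\<^sub>0 where "r\<^sub>0 > 0" and r\<^sub>0: "\<And>k. k \<ge> N \<Longrightarrow> P k r\<^sub>0"
    using tail by blast
  obtain \<rho> where \<rho>: "\<And>k. \<rho> k > 0 \<and> P k (\<rho> k)"
    using each by metis
  define r where "r = Min (insert r\<^sub>0 (\<rho> ` {..<N}))"
  have "r > 0"
    unfolding r_def using \<open>r\<^sub>0 > 0\<close> \<rho> by (subst Min_gr_iff) auto
  moreover have "P k r" for k
  proof (cases "k < N")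
    case True
    then show ?thesis
      using antimono[of k "\<rho> k" r] \<rho> by (simp add: r_def)
  next
    case False
    then show ?thesis
      using antimono[of k r\<^sub>0 r] r\<^sub>0 by (simp add: r_def)
  qed
  ultimately show ?thesis
    by blast
qed

lemma normals_uniformly_close_along_sequence:
  fixes S :: "nat \<Rightarrow> 'a::euclidean_space set"
  assumes "compact D" and "D \<noteq> {}" and "unique_normals D"
    and "\<And>k. compact (S k)" and "\<And>k. S k \<noteq> {}" and "\<And>k. unique_normals (S k)"
    and "(\<lambda>k. hausdorff_dist (S k) D) \<longlonglongrightarrow> 0" and "\<epsilon> > 0"
  shows "\<exists>r>0. normals_close D r \<epsilon> \<and> (\<forall>k. normals_close (S k) r \<epsilon>)"
proof -
  obtain r\<^sub>1 where "r\<^sub>1 > 0" and r\<^sub>1: "normals_close D r\<^sub>1 \<epsilon>"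
    using normals_uniformly_close[OF assms(1-3,8)] by blast
  have "\<exists>r>0. \<forall>k. normals_close (S k) r \<epsilon>"
  proof (rule uniform_radius_if_eventually_uniform)
    show "normals_close (S k) s \<epsilon>" if "normals_close (S k) r \<epsilon>" and "s \<le> r" for k r s
      using normals_close_antimono that .
    show "\<exists>r>0. normals_close (S k) r \<epsilon>" for k
      using normals_uniformly_close[OF assms(4-6,8)] .
    show "\<exists>N. \<exists>r>0. \<forall>k\<ge>N. normals_close (S k) r \<epsilon>"
      using eventually_normals_close[OF assms(1-4,6-8)] .
  qed
  then obtain r\<^sub>2 where "r\<^sub>2 > 0" and r\<^sub>2: "\<And>k. normals_close (S k) r\<^sub>2 \<epsilon>"
    by blast
  have "normals_close D (min r\<^sub>1 r\<^sub>2) \<epsilon>" and "normals_close (S k) (min r\<^sub>1 r\<^sub>2) \<epsilon>" for k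
    using normals_close_antimono[OF r\<^sub>1] normals_close_antimono[OF r\<^sub>2] by simp_all
  then show ?thesis
    using \<open>r\<^sub>1 > 0\<close> \<open>r\<^sub>2 > 0\<close> by (intro exI[of _ "min r\<^sub>1 r\<^sub>2"]) simp
qed

lemma convex_body_nonempty: "convex_body D \<Longrightarrow> D \<noteq> {}"
  unfolding convex_body_def using interior_subset by blast

lemma convex_body_frontier_nonempty:
  fixes D :: "'a::euclidean_space set"
  assumes "convex_body D"
  shows "frontier D \<noteq> {}"
proof (rule frontier_not_empty)
  show "D \<noteq> {}"
    using convex_body_nonempty[OF assms] .
  show "D \<noteq> UNIV"
    using assms compact_imp_bounded not_bounded_UNIV unfolding convex_body_def by blast
qed

lemma convex_body_unique_normals:
  fixes D :: "'a::euclidean_space set"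
  assumes "convex_body D" and "C1_boundary D"
  shows "unique_normals D"
  using C1_boundary_unique_normals[OF _ compact_imp_closed assms(2)] assms(1)
  unfolding convex_body_def by blast

theorem lemma5p4:
  fixes \<Omega> :: "'a::euclidean_space set" and \<Omega>k :: "nat \<Rightarrow> 'a set"
  assumes "convex_body \<Omega>" and "C1_boundary \<Omega>"
    and "\<And>k. convex_body (\<Omega>k k) \<and> smooth_boundary (\<Omega>k k) \<and> uniformly_convex (\<Omega>k k)"
    and "(\<lambda>k. hausdorff_dist (\<Omega>k k) \<Omega>) \<longlonglongrightarrow> 0"
    and "0 < \<Theta>" and "\<Theta> < 1"
  shows "\<exists>r>0. \<forall>k. max (omega \<Omega> r) (omega (\<Omega>k k) r) < sqrt (2 - 2 * \<Theta>)"
proof -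
  have bodies: "convex_body \<Omega>" "\<And>k. convex_body (\<Omega>k k)"
    using assms(1,3) by blast+
  then have compact: "compact \<Omega>" "\<And>k. compact (\<Omega>k k)"
    by (simp_all add: convex_body_def)
  have unique: "unique_normals \<Omega>" "\<And>k. unique_normals (\<Omega>k k)"
    using convex_body_unique_normals assms(1-3) smooth_boundary_imp_C1_boundary by blast+
  define \<epsilon> where "\<epsilon> = sqrt (2 - 2 * \<Theta>) / 2"
  have "0 < \<epsilon>" and "\<epsilon> < sqrt (2 - 2 * \<Theta>)"
    using assms(6) by (simp_all add: \<epsilon>_def)
  obtain r where "r > 0" and close: "normals_close \<Omega> r \<epsilon>" "\<And>k. normals_close (\<Omega>k k) r \<epsilon>"
    using normals_uniformly_close_along_sequence[OF compact(1) convex_body_nonempty[OF bodies(1)]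
        unique(1) compact(2) convex_body_nonempty[OF bodies(2)] unique(2) assms(4) \<open>0 < \<epsilon>\<close>]
    by blast
  have "omega \<Omega> r \<le> \<epsilon>" and "omega (\<Omega>k k) r \<le> \<epsilon>" for k
    using omega_le_if_normals_close[OF convex_body_frontier_nonempty[OF bodies(1)] \<open>r > 0\<close> close(1)]
      omega_le_if_normals_close[OF convex_body_frontier_nonempty[OF bodies(2)] \<open>r > 0\<close> close(2)] .
  then show ?thesis
    using \<open>r > 0\<close> \<open>\<epsilon> < sqrt (2 - 2 * \<Theta>)\<close> by (meson le_less_trans max_less_iff_conj)
qed

end
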